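(* For every $d\in\mathbb{Z}\setminus\{0\}$ and every $i=1,\ldots,n$, we have $\widetilde\phi^{\,d}(x_i)\in\mathcal{P}_{(2n-i-1)l,\,1}$.
   Context: Let $k$ be a field of characteristic zero, $n\ge3$, $l\ge1$, and $k[t,\mathbf{x}]=k[t,x_1,\ldots,x_n]$. Let $\widetilde D=\sum_{j=1}^{n-1}(n-j)\,x_{j+1}\,\partial/\partial x_j$ and $\widetilde{D'}=\sum_{j=2}^{n}(j-1)\,x_{j-1}\,\partial/\partial x_j$ as derivations of $k[t,\mathbf{x}]$ (so they kill $t$). For $p\in\ker\widetilde D$, $\widetilde\epsilon_p=\exp(p\widetilde D)$; for $q\in\ker\widetilde{D'}$, $\widetilde{\epsilon'_q}=\exp(q\widetilde{D'})$, with $\exp E(g)=\sum_{i\ge0}E^i(g)/i!$. Let $\widetilde\phi=\widetilde\epsilon_{t^l}\circ\widetilde{\epsilon'_1}\circ\widetilde\epsilon_{-t^l}$ ($\circ$ = composition). For $p=\sum u_{i_0,\ldots,i_n}t^{i_0}x_1^{i_1}\cdots x_n^{i_n}\neq0$, $\mathrm{supp}(p)=\{(i_0,\ldots,i_n):u_{i_0,\ldots,i_n}\neq0\}$, and for $\mathbf{w}\in\mathbb{N}^{n+1}$, $\deg_{\mathbf w}(p)=\max\{\sum_j i_jw_j:(i_0,\ldots,i_n)\in\mathrm{supp}(p)\}$. $\mathrm{lt}(p)$ is the leading term of $p$ for the lexicographic order with $t>x_1>\cdots>x_n$ (i.e. $t^{i_0}x_1^{i_1}\cdots x_n^{i_n}<t^{j_0}x_1^{j_1}\cdots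 x_n^{j_n}$ iff $i_r<j_r$ at the first index $r$ where they differ). Let $\mathbf{w}_1=(1,1,\ldots,1)$ and $\mathbf{w}_2=(n-2,\,2n-2,\,2n-3,\,\ldots,\,n-1)$ (weight $n-2$ on $t$ and $2n-j-1$ on $x_j$). For $\alpha,\beta\ge1$, $\mathcal{P}_{\alpha,\beta}$ is the set of nonzero $p\in k[t,\mathbf{x}]$ with $\deg_{\mathbf{w}_1}(p)\le\alpha+\beta$, $\deg_{\mathbf{w}_2}(p)\le(n-2)\alpha+(n-1)\beta$, and $\mathrm{lt}(p)\in k^*t^\alpha x_n^\beta$. *)

theory Defs
  imports Main "HOL-Library.Poly_Mapping"
begin

text \<open>Polynomials in k[t, x_1, ..., x_n]: finitely supported maps from monomials
  (exponent vectors nat =>0 nat) to coefficients. Variable 0 is t, variable j (1 <= j <= n) is x_j.\<close>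

type_synonym 'k mpoly = "(nat \<Rightarrow>\<^sub>0 nat) \<Rightarrow>\<^sub>0 'k"

definition Var :: "nat \<Rightarrow> 'k::comm_ring_1 mpoly" where
  "Var j = Poly_Mapping.single (Poly_Mapping.single j 1) 1"

definition Const :: "'k::comm_ring_1 \<Rightarrow> 'k mpoly" where
  "Const c = Poly_Mapping.single 0 c"

definition pderivv :: "nat \<Rightarrow> 'k::comm_ring_1 mpoly \<Rightarrow> 'k mpoly" where
  "pderivv j p = (\<Sum>m\<in>Poly_Mapping.keys p.  Poly_Mapping.single (m - Poly_Mapping.single j 1)
                    (of_nat (Poly_Mapping.lookup (m::nat \<Rightarrow>\<^sub>0 nat) j) * Poly_Mapping.lookup p m :: 'k))"

definition Dt :: "nat \<Rightarrow> 'k::comm_ring_1 mpoly \<Rightarrow> 'k mpoly" where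
  "Dt n g = (\<Sum>j\<in>{1..n-1}. of_nat (n - j) * Var (j+1) * pderivv j g)"

definition Dt' :: "nat \<Rightarrow> 'k::comm_ring_1 mpoly \<Rightarrow> 'k mpoly" where
  "Dt' n g = (\<Sum>j\<in>{2..n}. of_nat (j - 1) * Var (j-1) * pderivv j g)"

definition expE :: "('k::field_char_0 mpoly \<Rightarrow> 'k mpoly) \<Rightarrow> 'k mpoly \<Rightarrow> 'k mpoly" where
  "expE E g = (\<Sum>i < (LEAST N. \<forall>m\<ge>N. (E ^^ m) g = 0). Const (1 / fact i) * (E ^^ i) g)"

definition eps :: "nat \<Rightarrow> 'k::field_char_0 mpoly \<Rightarrow> 'k mpoly \<Rightarrow> 'k mpoly" where
  "eps n p = expE (\<lambda>g. p * Dt n g)"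

definition eps' :: "nat \<Rightarrow> 'k::field_char_0 mpoly \<Rightarrow> 'k mpoly \<Rightarrow> 'k mpoly" where
  "eps' n q = expE (\<lambda>g. q * Dt' n g)"

definition phi :: "nat \<Rightarrow> nat \<Rightarrow> 'k::field_char_0 mpoly \<Rightarrow> 'k mpoly" where
  "phi n l = eps n (Var 0 ^ l) \<circ> eps' n 1 \<circ> eps n (- (Var 0 ^ l))"

definition ipow :: "('a \<Rightarrow> 'a) \<Rightarrow> int \<Rightarrow> 'a \<Rightarrow> 'a" where
  "ipow f d = (if d \<ge> 0 then f ^^ nat d else (inv f) ^^ nat (- d))"

definition wdeg :: "nat \<Rightarrow> (nat \<Rightarrow> nat) \<Rightarrow> 'k::zero mpoly \<Rightarrow> nat" where
  "wdeg n w p = Max ((\<lambda>m. \<Sum>j\<in>{0..n}. Poly_Mapping.lookup m j * w j) ` Poly_Mapping.keys p)"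

definition w1 :: "nat \<Rightarrow> nat" where "w1 j = 1"

definition w2 :: "nat \<Rightarrow> nat \<Rightarrow> nat" where
  "w2 n j = (if j = 0 then n - 2 else 2 * n - j - 1)"

definition lex_less :: "(nat \<Rightarrow>\<^sub>0 nat) \<Rightarrow> (nat \<Rightarrow>\<^sub>0 nat) \<Rightarrow> bool" where
  "lex_less m m' \<longleftrightarrow> (\<exists>r. (\<forall>s<r. Poly_Mapping.lookup m s = Poly_Mapping.lookup m' s) \<and> Poly_Mapping.lookup m r < Poly_Mapping.lookup m' r)"

definition is_lead_mon :: "'k::zero mpoly \<Rightarrow> (nat \<Rightarrow>\<^sub>0 nat) \<Rightarrow> bool" where
  "is_lead_mon p m \<longleftrightarrow> m \<in> Poly_Mapping.keys p \<and> (\<forall>m'\<in>Poly_Mapping.keys p. m' \<noteq> m \<longrightarrow> lex_less m' m)"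

definition Pset :: "nat \<Rightarrow> nat \<Rightarrow> nat \<Rightarrow> 'k::zero mpoly set" where
  "Pset n \<alpha> \<beta> = {p. p \<noteq> 0 \<and> wdeg n w1 p \<le> \<alpha> + \<beta>
      \<and> wdeg n (w2 n) p \<le> (n - 2) * \<alpha> + (n - 1) * \<beta>
      \<and> is_lead_mon p (Poly_Mapping.single 0 \<alpha> + Poly_Mapping.single n \<beta>)}"

end

theory Submission
  imports Defs "HOL-Computational_Algebra.Polynomial"
begin

text \<open>Both derivations are locally nilpotent, so a \<mapsto> exp(a B) is a one-parameter group for each
  of them, and phi^d is the conjugate eps(t^l) \<circ> exp(d D') \<circ> eps(-t^l). All three maps preserve the
  linear forms v_1(t) x_1 + ... + v_n(t) x_n and act on the coefficient vector (v_1, ..., v_n) by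
  explicit shift operators. Starting from x_i, eps(-t^l) gives components of t-degree at most l(n-i),
  attained only at x_n; exp(d D') keeps this bound and moves the top term down to x_1 with the factor
  d^(n-1) \<noteq> 0; finally eps(t^l) moves it back up to x_n, multiplied by t^(l(n-1)), while the
  x_j-component gets t-degree at most l(j-1) + l(n-i). Hence phi^d(x_i) is a linear form with leading
  monomial t^((2n-i-1)l) x_n, and both weighted degree bounds follow from these bounds on t-degrees.\<close>

lemma Const_mult: "Const a * Const b = (Const (a * b) :: 'k::comm_ring_1 mpoly)"
  by (simp add: Const_def mult_single)

lemma Const_1 [simp]: "Const 1 = 1"
  by (simp add: Const_def)

lemma Const_0 [simp]: "Const 0 = 0"
  by (simp add: Const_def)

lemma Const_add: "Const (a + b) = Const a + Const b"
  by (simp add: Const_def single_add)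

lemma Const_uminus: "Const (- a) = - Const a"
  by (simp add: Const_def single_uminus)

lemma Const_sum: "Const (sum f A) = (\<Sum>x\<in>A. Const (f x))"
  by (induction A rule: infinite_finite_induct) (auto simp: Const_add)

lemma Const_mult_single: "Const c * Poly_Mapping.single m x = Poly_Mapping.single m (c * x)"
  by (simp add: Const_def mult_single)

lemma Const_eq_0_iff: "Const x = 0 \<longleftrightarrow> x = 0"
  by (metis Const_def lookup_single_eq single_zero)

lemma poly_mapping_eq_sum_single:
  "p = (\<Sum>m\<in>Poly_Mapping.keys p. Poly_Mapping.single m (Poly_Mapping.lookup p m))"
  by (rule poly_mapping_eqI) (simp add: lookup_sum lookup_single when_def in_keys_iff)

lemma Var0_power: "(Var 0 :: 'k::comm_ring_1 mpoly) ^ l = Poly_Mapping.single (Poly_Mapping.single 0 l) 1"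
  by (induction l) (simp_all add: Var_def mult_single single_add[symmetric])

lemma of_nat_mult_Var:
  "(of_nat c :: 'k::comm_ring_1 mpoly) * Var j = Poly_Mapping.single (Poly_Mapping.single j 1) (of_nat c)"
  by (simp add: Var_def mult_single flip: single_of_nat)

lemma pderivv_superset:
  assumes "finite S" "Poly_Mapping.keys p \<subseteq> S"
  shows "pderivv j p = (\<Sum>m\<in>S. Poly_Mapping.single (m - Poly_Mapping.single j 1)
            (of_nat (Poly_Mapping.lookup m j) * Poly_Mapping.lookup p m))"
  unfolding pderivv_def
  by (rule sum.mono_neutral_left[OF assms]) (auto simp: in_keys_iff)

lemma pderivv_add: "pderivv j (p + q) = pderivv j p + pderivv j q"
proof -
  let ?S = "Poly_Mapping.keys p \<union> Poly_Mapping.keys q"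
  have "Poly_Mapping.keys (p + q) \<subseteq> ?S"
    by (rule keys_add)
  then show ?thesis
    by (simp add: pderivv_superset[of ?S] lookup_add distrib_left single_add sum.distrib)
qed

lemma pderivv_zero [simp]: "pderivv j 0 = 0"
  by (simp add: pderivv_def)

lemma pderivv_sum: "pderivv j (sum f A) = (\<Sum>x\<in>A. pderivv j (f x))"
  by (induction A rule: infinite_finite_induct) (auto simp: pderivv_add)

lemma pderivv_single:
  "pderivv j (Poly_Mapping.single m c) =
     Poly_Mapping.single (m - Poly_Mapping.single j 1) (of_nat (Poly_Mapping.lookup m j) * c)"
  by (subst pderivv_superset[of "{m}"]) auto

lemma pderivv_Const_mult: "pderivv j (Const c * p) = Const c * pderivv j p"
proof -
  have cp: "Const c * p = (\<Sum>m\<in>Poly_Mapping.keys p. Poly_Mapping.single m (c * Poly_Mapping.lookup p m))"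
    by (subst poly_mapping_eq_sum_single[of p]) (simp add: sum_distrib_left Const_mult_single)
  have dp: "pderivv j p =
      (\<Sum>m\<in>Poly_Mapping.keys p. pderivv j (Poly_Mapping.single m (Poly_Mapping.lookup p m)))"
    by (subst poly_mapping_eq_sum_single[of p]) (simp add: pderivv_sum)
  show ?thesis
    by (simp add: cp dp pderivv_sum pderivv_single sum_distrib_left Const_mult_single mult.left_commute)
qed

lemma Dt_add: "Dt n (g + h) = Dt n g + Dt n h"
  by (simp add: Dt_def pderivv_add distrib_left sum.distrib)

lemma Dt_Const_mult: "Dt n (Const c * g) = Const c * Dt n g"
  by (simp add: Dt_def pderivv_Const_mult sum_distrib_left mult.left_commute)

lemma Dt'_add: "Dt' n (g + h) = Dt' n g + Dt' n h"
  by (simp add: Dt'_def pderivv_add distrib_left sum.distrib)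

lemma Dt'_Const_mult: "Dt' n (Const c * g) = Const c * Dt' n g"
  by (simp add: Dt'_def pderivv_Const_mult sum_distrib_left mult.left_commute)

section \<open>Local nilpotency\<close>

definition var_wdeg :: "(nat \<Rightarrow> nat) \<Rightarrow> nat \<Rightarrow> (nat \<Rightarrow>\<^sub>0 nat) \<Rightarrow> nat" where
  "var_wdeg \<omega> n m = (\<Sum>s\<in>{1..n}. \<omega> s * Poly_Mapping.lookup m s)"

lemma var_wdeg_le:
  assumes "\<forall>j\<in>{1..n}. \<omega> j \<le> n"
  shows "var_wdeg \<omega> n m \<le> n * var_wdeg (\<lambda>_. 1) n m"
proof -
  have "var_wdeg \<omega> n m \<le> (\<Sum>s\<in>{1..n}. n * Poly_Mapping.lookup m s)"
    unfolding var_wdeg_def by (rule sum_mono) (use assms in auto)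
  then show ?thesis
    by (simp add: var_wdeg_def sum_distrib_left)
qed

lemma var_wdeg_exchange:
  assumes "j \<in> {1..n}" "j' \<in> {1..n}" "Poly_Mapping.lookup m j > 0"
  shows "var_wdeg \<omega> n (Poly_Mapping.single j' 1 + (m - Poly_Mapping.single j 1)) + \<omega> j
           = var_wdeg \<omega> n m + \<omega> j'"
proof -
  let ?M = "Poly_Mapping.single j' 1 + (m - Poly_Mapping.single j 1)"
  have "\<omega> s * Poly_Mapping.lookup ?M s + (if s = j then \<omega> s else 0)
          = \<omega> s * Poly_Mapping.lookup m s + (if s = j' then \<omega> s else 0)" for s
    using assms(3) by (auto simp: lookup_add lookup_minus lookup_single when_def algebra_simps)
  then have "(\<Sum>s\<in>{1..n}. \<omega> s * Poly_Mapping.lookup ?M s + (if s = j then \<omega> s else 0))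
      = (\<Sum>s\<in>{1..n}. \<omega> s * Poly_Mapping.lookup m s + (if s = j' then \<omega> s else 0))"
    by simp
  then show ?thesis
    using assms(1,2) by (simp add: sum.distrib var_wdeg_def)
qed

lemma var_wdeg_add_t_power: "var_wdeg \<omega> n (Poly_Mapping.single 0 l + m) = var_wdeg \<omega> n m"
  unfolding var_wdeg_def by (rule sum.cong) (auto simp: lookup_add lookup_single when_def)

lemma keys_funpow_if_raises_weight:
  fixes B :: "'k::comm_ring_1 mpoly \<Rightarrow> 'k mpoly"
  assumes raise: "\<And>g m. m \<in> Poly_Mapping.keys (B g) \<Longrightarrow> \<exists>m'\<in>Poly_Mapping.keys g.
        var_wdeg (\<lambda>_. 1) n m = var_wdeg (\<lambda>_. 1) n m' \<and> var_wdeg \<omega> n m = var_wdeg \<omega> n m' + 1"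
    and m: "m \<in> Poly_Mapping.keys ((B ^^ k) g)"
  shows "\<exists>m'\<in>Poly_Mapping.keys g.
      var_wdeg (\<lambda>_. 1) n m = var_wdeg (\<lambda>_. 1) n m' \<and> var_wdeg \<omega> n m = var_wdeg \<omega> n m' + k"
  using m
proof (induction k arbitrary: m)
  case 0
  then show ?case by auto
next
  case (Suc k)
  then obtain m1 where m1: "m1 \<in> Poly_Mapping.keys ((B ^^ k) g)"
    "var_wdeg (\<lambda>_. 1) n m = var_wdeg (\<lambda>_. 1) n m1" "var_wdeg \<omega> n m = var_wdeg \<omega> n m1 + 1"
    using raise[of m "(B ^^ k) g"] by auto
  from Suc.IH[OF m1(1)] obtain m' where "m' \<in> Poly_Mapping.keys g"
    "var_wdeg (\<lambda>_. 1) n m1 = var_wdeg (\<lambda>_. 1) n m'" "var_wdeg \<omega> n m1 = var_wdeg \<omega> n m' + k"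
    by blast
  with m1 show ?case
    by auto
qed

text \<open>The \<open>\<omega>\<close>-weight of a monomial is at most \<open>n\<close> times its degree in \<open>x\<^sub>1, \<dots>, x\<^sub>n\<close>,
  which \<open>B\<close> preserves, so it cannot be raised indefinitely.\<close>

lemma locally_nilpotent_if_raises_weight:
  fixes B :: "'k::comm_ring_1 mpoly \<Rightarrow> 'k mpoly"
  assumes \<omega>: "\<forall>j\<in>{1..n}. \<omega> j \<le> n"
    and raise: "\<And>g m. m \<in> Poly_Mapping.keys (B g) \<Longrightarrow> \<exists>m'\<in>Poly_Mapping.keys g.
        var_wdeg (\<lambda>_. 1) n m = var_wdeg (\<lambda>_. 1) n m' \<and> var_wdeg \<omega> n m = var_wdeg \<omega> n m' + 1"
  shows "\<exists>N. \<forall>k\<ge>N. (B ^^ k) g = 0"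
proof -
  define M where "M = (\<Sum>m\<in>Poly_Mapping.keys g. var_wdeg (\<lambda>_. 1) n m)"
  have M: "m \<in> Poly_Mapping.keys g \<Longrightarrow> var_wdeg (\<lambda>_. 1) n m \<le> M" for m
    unfolding M_def by (rule member_le_sum) auto
  have "(B ^^ k) g = 0" if k: "k > n * M" for k
  proof (rule ccontr)
    assume "(B ^^ k) g \<noteq> 0"
    then obtain m where "m \<in> Poly_Mapping.keys ((B ^^ k) g)"
      using keys_eq_empty by blast
    with keys_funpow_if_raises_weight[OF raise] obtain m' where m': "m' \<in> Poly_Mapping.keys g"
      "var_wdeg (\<lambda>_. 1) n m = var_wdeg (\<lambda>_. 1) n m'" "var_wdeg \<omega> n m = var_wdeg \<omega> n m' + k"
      by blast
    have "var_wdeg \<omega> n m \<le> n * var_wdeg (\<lambda>_. 1) n m"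
      by (rule var_wdeg_le[OF \<omega>])
    also have "\<dots> \<le> n * M"
      using M[OF m'(1)] m'(2) by simp
    finally show False
      using m'(3) k by linarith
  qed
  then show ?thesis
    by (metis Suc_le_lessD)
qed

lemma keys_pderivv:
  assumes "m \<in> Poly_Mapping.keys (pderivv j g)"
  shows "\<exists>m'\<in>Poly_Mapping.keys g. Poly_Mapping.lookup m' j > 0 \<and> m = m' - Poly_Mapping.single j 1"
proof -
  have "m \<in> (\<Union>m'\<in>Poly_Mapping.keys g. Poly_Mapping.keys (Poly_Mapping.single (m' - Poly_Mapping.single j 1)
            (of_nat (Poly_Mapping.lookup m' j) * Poly_Mapping.lookup g m')))"
    using assms unfolding pderivv_def by (rule subsetD[OF keys_sum])
  then obtain m' where m': "m' \<in> Poly_Mapping.keys g"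
    "m \<in> Poly_Mapping.keys (Poly_Mapping.single (m' - Poly_Mapping.single j 1)
            (of_nat (Poly_Mapping.lookup m' j) * Poly_Mapping.lookup g m'))"
    by blast
  then have "of_nat (Poly_Mapping.lookup m' j) * Poly_Mapping.lookup g m' \<noteq> 0"
    and "m = m' - Poly_Mapping.single j 1"
    by (auto split: if_splits)
  moreover from this(1) have "Poly_Mapping.lookup m' j \<noteq> 0"
    by (cases "Poly_Mapping.lookup m' j") auto
  ultimately show ?thesis
    using m'(1) by auto
qed

lemma keys_single_mult:
  assumes "m \<in> Poly_Mapping.keys (Poly_Mapping.single a c * f)"
  shows "\<exists>b\<in>Poly_Mapping.keys f. m = a + b"
  using keys_mult[of "Poly_Mapping.single a c" f] assms by (auto split: if_splits)

lemma keys_Dt: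
  assumes "m \<in> Poly_Mapping.keys (Dt n g)"
  shows "\<exists>j\<in>{1..n-1}. \<exists>m'\<in>Poly_Mapping.keys g. Poly_Mapping.lookup m' j > 0 \<and>
          m = Poly_Mapping.single (j + 1) 1 + (m' - Poly_Mapping.single j 1)"
proof -
  have "m \<in> (\<Union>j\<in>{1..n-1}. Poly_Mapping.keys (of_nat (n - j) * Var (j + 1) * pderivv j g))"
    using assms unfolding Dt_def by (rule subsetD[OF keys_sum])
  then obtain j where j: "j \<in> {1..n-1}"
    "m \<in> Poly_Mapping.keys (of_nat (n - j) * Var (j + 1) * pderivv j g)"
    by blast
  from keys_single_mult[OF j(2)[unfolded of_nat_mult_Var]] obtain b
    where "b \<in> Poly_Mapping.keys (pderivv j g)" "m = Poly_Mapping.single (j + 1) 1 + b"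
    by blast
  with keys_pderivv j(1) show ?thesis
    by blast
qed

lemma keys_Dt':
  assumes "m \<in> Poly_Mapping.keys (Dt' n g)"
  shows "\<exists>j\<in>{2..n}. \<exists>m'\<in>Poly_Mapping.keys g. Poly_Mapping.lookup m' j > 0 \<and>
          m = Poly_Mapping.single (j - 1) 1 + (m' - Poly_Mapping.single j 1)"
proof -
  have "m \<in> (\<Union>j\<in>{2..n}. Poly_Mapping.keys (of_nat (j - 1) * Var (j - 1) * pderivv j g))"
    using assms unfolding Dt'_def by (rule subsetD[OF keys_sum])
  then obtain j where j: "j \<in> {2..n}"
    "m \<in> Poly_Mapping.keys (of_nat (j - 1) * Var (j - 1) * pderivv j g)"
    by blast
  from keys_single_mult[OF j(2)[unfolded of_nat_mult_Var]] obtain b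
    where "b \<in> Poly_Mapping.keys (pderivv j g)" "m = Poly_Mapping.single (j - 1) 1 + b"
    by blast
  with keys_pderivv j(1) show ?thesis
    by blast
qed

text \<open>Each term of \<open>Dt\<close> trades a factor \<open>x\<^sub>j\<close> for \<open>x\<^sub>j\<^sub>+\<^sub>1\<close> and each term of \<open>Dt'\<close> trades \<open>x\<^sub>j\<close> for
  \<open>x\<^sub>j\<^sub>-\<^sub>1\<close>, so the weights \<open>j\<close> and \<open>n + 1 - j\<close> respectively go up by one.\<close>

lemma locally_nilpotent_t_power_Dt:
  "\<exists>N. \<forall>k\<ge>N. ((\<lambda>g. Var 0 ^ l * Dt n g) ^^ k) g = (0 :: 'k::comm_ring_1 mpoly)"
proof (rule locally_nilpotent_if_raises_weight[where \<omega> = "\<lambda>j. j" and n = n])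
  fix g :: "'k mpoly" and m
  assume "m \<in> Poly_Mapping.keys (Var 0 ^ l * Dt n g)"
  then obtain b where b: "b \<in> Poly_Mapping.keys (Dt n g)" "m = Poly_Mapping.single 0 l + b"
    using keys_single_mult by (fastforce simp: Var0_power)
  from keys_Dt[OF b(1)] obtain j m' where jm: "j \<in> {1..n-1}" "m' \<in> Poly_Mapping.keys g"
    "Poly_Mapping.lookup m' j > 0" "b = Poly_Mapping.single (j + 1) 1 + (m' - Poly_Mapping.single j 1)"
    by blast
  have j: "j \<in> {1..n}" "j + 1 \<in> {1..n}"
    using jm(1) by auto
  have "var_wdeg (\<lambda>_. 1) n m = var_wdeg (\<lambda>_. 1) n m'"
    "var_wdeg (\<lambda>j. j) n m = var_wdeg (\<lambda>j. j) n m' + 1"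
    using var_wdeg_exchange[OF j jm(3), of "\<lambda>_. 1"] var_wdeg_exchange[OF j jm(3), of "\<lambda>j. j"]
    by (simp_all add: b(2) var_wdeg_add_t_power jm(4))
  with jm(2) show "\<exists>m'\<in>Poly_Mapping.keys g. var_wdeg (\<lambda>_. 1) n m = var_wdeg (\<lambda>_. 1) n m'
      \<and> var_wdeg (\<lambda>j. j) n m = var_wdeg (\<lambda>j. j) n m' + 1"
    by blast
qed auto

lemma locally_nilpotent_Dt':
  "\<exists>N. \<forall>k\<ge>N. (Dt' n ^^ k) g = (0 :: 'k::comm_ring_1 mpoly)"
proof (rule locally_nilpotent_if_raises_weight[where \<omega> = "\<lambda>j. n + 1 - j" and n = n])
  fix g :: "'k mpoly" and m
  assume "m \<in> Poly_Mapping.keys (Dt' n g)"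
  from keys_Dt'[OF this] obtain j m' where jm: "j \<in> {2..n}" "m' \<in> Poly_Mapping.keys g"
    "Poly_Mapping.lookup m' j > 0" "m = Poly_Mapping.single (j - 1) 1 + (m' - Poly_Mapping.single j 1)"
    by blast
  have j: "j \<in> {1..n}" "j - 1 \<in> {1..n}"
    using jm(1) by auto
  have deg: "var_wdeg (\<lambda>_. 1) n m = var_wdeg (\<lambda>_. 1) n m'"
    using var_wdeg_exchange[OF j jm(3), of "\<lambda>_. 1"] by (simp add: jm(4))
  have "var_wdeg (\<lambda>j. n + 1 - j) n m + (n + 1 - j) = var_wdeg (\<lambda>j. n + 1 - j) n m' + (n + 1 - (j - 1))"
    using var_wdeg_exchange[OF j jm(3), of "\<lambda>j. n + 1 - j"] by (simp only: jm(4))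
  moreover have "n + 1 - (j - 1) = (n + 1 - j) + 1"
    using jm(1) by auto
  ultimately have "var_wdeg (\<lambda>j. n + 1 - j) n m = var_wdeg (\<lambda>j. n + 1 - j) n m' + 1"
    by linarith
  with deg jm(2) show "\<exists>m'\<in>Poly_Mapping.keys g. var_wdeg (\<lambda>_. 1) n m = var_wdeg (\<lambda>_. 1) n m'
      \<and> var_wdeg (\<lambda>j. n + 1 - j) n m = var_wdeg (\<lambda>j. n + 1 - j) n m' + 1"
    by blast
qed auto

section \<open>Exponentials of locally nilpotent linear maps\<close>

definition locally_nilpotent_linear :: "('k::field_char_0 mpoly \<Rightarrow> 'k mpoly) \<Rightarrow> bool" where
  "locally_nilpotent_linear B \<longleftrightarrow> (\<forall>g h. B (g + h) = B g + B h) \<and> (\<forall>c g. B (Const c * g) = Const c * B g)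
     \<and> (\<forall>g. \<exists>N. \<forall>k\<ge>N. (B ^^ k) g = 0)"

definition exp_flow :: "('k::field_char_0 mpoly \<Rightarrow> 'k mpoly) \<Rightarrow> 'k \<Rightarrow> 'k mpoly \<Rightarrow> 'k mpoly" where
  "exp_flow B a = expE (\<lambda>g. Const a * B g)"

lemma expE_eq_sum_lessThan:
  assumes "\<forall>m\<ge>N. (E ^^ m) g = 0"
  shows "expE E g = (\<Sum>i<N. Const (1 / fact i) * (E ^^ i) g)"
proof -
  define L where "L = (LEAST N. \<forall>m\<ge>N. (E ^^ m) g = 0)"
  have L: "\<forall>m\<ge>L. (E ^^ m) g = 0"
    unfolding L_def by (rule LeastI[of _ N]) (rule assms)
  have "L \<le> N"
    unfolding L_def by (rule Least_le) (rule assms)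
  then have "(\<Sum>i<L. Const (1 / fact i) * (E ^^ i) g) = (\<Sum>i<N. Const (1 / fact i) * (E ^^ i) g)"
    by (intro sum.mono_neutral_left) (auto simp: L)
  then show ?thesis
    by (simp only: expE_def L_def)
qed

lemma binomial_exp_convolution:
  "(\<Sum>i\<le>k. (a::'a::field_char_0) ^ i / fact i * (b ^ (k - i) / fact (k - i))) = (a + b) ^ k / fact k"
proof -
  have "(a + b) ^ k / fact k = (\<Sum>i\<le>k. of_nat (k choose i) * a ^ i * b ^ (k - i) / fact k)"
    by (simp add: binomial_ring sum_divide_distrib)
  also have "\<dots> = (\<Sum>i\<le>k. a ^ i / fact i * (b ^ (k - i) / fact (k - i)))"
    by (rule sum.cong) (auto simp: binomial_fact field_simps)
  finally show ?thesis
    by simp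
qed

context
  fixes B :: "'k::field_char_0 mpoly \<Rightarrow> 'k mpoly"
  assumes B: "locally_nilpotent_linear B"
begin

lemma lnl_add: "B (g + h) = B g + B h"
  using B by (simp add: locally_nilpotent_linear_def)

lemma lnl_Const_mult: "B (Const c * g) = Const c * B g"
  using B by (simp add: locally_nilpotent_linear_def)

lemma lnl_power_add: "(B ^^ k) (g + h) = (B ^^ k) g + (B ^^ k) h"
  by (induction k) (simp_all add: lnl_add)

lemma lnl_power_Const_mult: "(B ^^ k) (Const c * g) = Const c * (B ^^ k) g"
  by (induction k) (simp_all add: lnl_Const_mult)

lemma lnl_power_zero: "(B ^^ k) 0 = 0"
  using lnl_power_add[of k 0 0] by simp

lemma lnl_power_sum: "(B ^^ k) (sum f A) = (\<Sum>x\<in>A. (B ^^ k) (f x))"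
  by (induction A rule: infinite_finite_induct) (simp_all add: lnl_power_zero lnl_power_add)

lemma lnl_nilpotent: "\<exists>N. \<forall>m\<ge>N. (B ^^ m) g = 0"
  using B by (simp add: locally_nilpotent_linear_def)

lemma lnl_funpow_scaled: "((\<lambda>g. Const a * B g) ^^ k) g = Const (a ^ k) * (B ^^ k) g"
  by (induction k) (simp_all add: lnl_Const_mult Const_mult mult.assoc[symmetric] mult.commute)

lemma exp_flow_eq:
  assumes "\<forall>m\<ge>N. (B ^^ m) g = 0"
  shows "exp_flow B a g = (\<Sum>i<N. Const (a ^ i / fact i) * (B ^^ i) g)"
proof -
  have "\<forall>m\<ge>N. ((\<lambda>g. Const a * B g) ^^ m) g = 0"
    using assms by (simp add: lnl_funpow_scaled)
  then show ?thesis
    unfolding exp_flow_def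
    by (simp add: expE_eq_sum_lessThan lnl_funpow_scaled mult.assoc[symmetric] Const_mult)
qed

lemma exp_flow_0: "exp_flow B 0 g = g"
proof -
  obtain N where "\<forall>m\<ge>N. (B ^^ m) g = 0"
    using lnl_nilpotent by blast
  then have "\<forall>m\<ge>Suc N. (B ^^ m) g = 0"
    by simp
  from exp_flow_eq[OF this, of 0] show ?thesis
    by (simp add: sum.lessThan_Suc_shift del: sum.lessThan_Suc)
qed

lemma exp_flow_add: "exp_flow B a (exp_flow B b g) = exp_flow B (a + b) g"
proof -
  obtain N where N: "\<forall>m\<ge>N. (B ^^ m) g = 0"
    using lnl_nilpotent by blast
  define c where "c i j = a ^ i / fact i * (b ^ j / fact j)" for i j
  define h where "h = (\<Sum>j<N. Const (b ^ j / fact j) * (B ^^ j) g)"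
  have Bh: "(B ^^ m) h = (\<Sum>j<N. Const (b ^ j / fact j) * (B ^^ (m + j)) g)" for m
    unfolding h_def by (simp add: lnl_power_sum lnl_power_Const_mult funpow_add)
  then have "\<forall>m\<ge>N. (B ^^ m) h = 0"
    using N by simp
  moreover have "exp_flow B b g = h"
    unfolding h_def by (rule exp_flow_eq[OF N])
  ultimately have "exp_flow B a (exp_flow B b g) = (\<Sum>i<N. Const (a ^ i / fact i) * (B ^^ i) h)"
    by (simp add: exp_flow_eq)
  also have "\<dots> = (\<Sum>(i, j)\<in>{..<N} \<times> {..<N}. Const (c i j) * (B ^^ (i + j)) g)"
    by (simp add: Bh sum_distrib_left mult.assoc[symmetric] Const_mult sum.cartesian_product c_def)
  also have "\<dots> = (\<Sum>(i, j)\<in>{(i, j). i + j < N}. Const (c i j) * (B ^^ (i + j)) g)"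
    by (rule sum.mono_neutral_right) (auto, meson N not_le)
  also have "\<dots> = (\<Sum>k<N. \<Sum>i\<le>k. Const (c i (k - i)) * (B ^^ (i + (k - i))) g)"
    by (rule sum.triangle_reindex)
  also have "\<dots> = (\<Sum>k<N. Const (\<Sum>i\<le>k. c i (k - i)) * (B ^^ k) g)"
    by (simp add: Const_sum sum_distrib_right)
  also have "\<dots> = exp_flow B (a + b) g"
  proof -
    have "(\<Sum>i\<le>k. c i (k - i)) = (a + b) ^ k / fact k" for k
      unfolding c_def by (rule binomial_exp_convolution)
    then show ?thesis
      by (simp only: exp_flow_eq[OF N])
  qed
  finally show ?thesis .
qed

end

lemma ipow_conj_exp_flow:
  assumes B: "locally_nilpotent_linear B" and C: "locally_nilpotent_linear C"
  shows "ipow (exp_flow C 1 \<circ> exp_flow B 1 \<circ> exp_flow C (-1)) d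
           = exp_flow C 1 \<circ> exp_flow B (of_int d) \<circ> exp_flow C (-1)"
proof -
  let ?conj = "\<lambda>a. exp_flow C 1 \<circ> exp_flow B a \<circ> exp_flow C (-1)"
  have CC: "exp_flow C (-1) (exp_flow C 1 x) = x" for x
    using exp_flow_add[OF C, of "-1" 1 x] exp_flow_0[OF C] by simp
  have conj_mult: "?conj a \<circ> ?conj b = ?conj (a + b)" for a b
    by (rule ext) (simp add: CC exp_flow_add[OF B])
  have conj_0: "?conj 0 = id"
    using exp_flow_add[OF C, of 1 "-1"] by (intro ext) (simp add: exp_flow_0[OF B] exp_flow_0[OF C])
  have conj_power: "?conj a ^^ k = ?conj (of_nat k * a)" for a k
  proof (induction k)
    case 0
    show ?case
      by (simp only: funpow.simps(1) conj_0 of_nat_0 mult_zero_left)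
  next
    case (Suc k)
    have "?conj a ^^ Suc k = ?conj (a + of_nat k * a)"
      by (simp only: funpow.simps(2) Suc.IH conj_mult)
    also have "a + of_nat k * a = of_nat (Suc k) * a"
      by (simp add: algebra_simps)
    finally show ?case .
  qed
  have "inv (?conj 1) = ?conj (-1)"
    by (rule inv_unique_comp) (simp_all only: conj_mult conj_0 add.right_inverse add.left_inverse)
  then show ?thesis
    by (cases "d \<ge> 0") (simp_all add: ipow_def conj_power)
qed

definition tDt :: "nat \<Rightarrow> nat \<Rightarrow> 'k::field_char_0 mpoly \<Rightarrow> 'k mpoly" where
  "tDt n l g = Var 0 ^ l * Dt n g"

lemma locally_nilpotent_linear_tDt: "locally_nilpotent_linear (tDt n l)"
  unfolding locally_nilpotent_linear_def tDt_def
  by (simp add: Dt_add Dt_Const_mult distrib_left mult.left_commute locally_nilpotent_t_power_Dt)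

lemma locally_nilpotent_linear_Dt': "locally_nilpotent_linear (Dt' n)"
  unfolding locally_nilpotent_linear_def
  by (simp add: Dt'_add Dt'_Const_mult locally_nilpotent_Dt')

lemma ipow_phi: "ipow (phi n l) d = exp_flow (tDt n l) 1 \<circ> exp_flow (Dt' n) (of_int d) \<circ> exp_flow (tDt n l) (-1)"
proof -
  have phi_conj: "phi n l = exp_flow (tDt n l) 1 \<circ> exp_flow (Dt' n) 1 \<circ> exp_flow (tDt n l) (-1)"
    unfolding phi_def eps_def eps'_def exp_flow_def tDt_def by (simp add: Const_uminus)
  show ?thesis
    unfolding phi_conj
    by (rule ipow_conj_exp_flow[OF locally_nilpotent_linear_Dt' locally_nilpotent_linear_tDt])
qed

section \<open>Linear forms with coefficients in \<open>k[t]\<close>\<close>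

definition tpoly :: "'k::comm_ring_1 poly \<Rightarrow> 'k mpoly" where
  "tpoly p = poly (map_poly Const p) (Var 0)"

lemma map_poly_Const_add: "map_poly Const (p + q) = map_poly Const p + map_poly Const q"
  by (rule poly_eqI) (simp add: coeff_map_poly Const_add)

lemma map_poly_Const_mult: "map_poly Const (p * q) = map_poly Const p * map_poly Const q"
  by (rule poly_eqI) (simp add: coeff_map_poly coeff_mult Const_sum Const_mult)

lemma tpoly_add: "tpoly (p + q) = tpoly p + tpoly q"
  by (simp add: tpoly_def map_poly_Const_add)

lemma tpoly_mult: "tpoly (p * q) = tpoly p * tpoly q"
  by (simp add: tpoly_def map_poly_Const_mult)

lemma tpoly_0 [simp]: "tpoly 0 = 0"
  by (simp add: tpoly_def)

lemma tpoly_1 [simp]: "tpoly 1 = 1"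
  by (simp add: tpoly_def)

lemma tpoly_sum: "tpoly (sum f A) = (\<Sum>x\<in>A. tpoly (f x))"
  by (induction A rule: infinite_finite_induct) (auto simp: tpoly_add)

lemma tpoly_of_nat: "tpoly (of_nat c) = of_nat c"
  by (induction c) (simp_all add: tpoly_add)

lemma tpoly_smult: "tpoly (smult c p) = Const c * tpoly p"
proof -
  have "tpoly [:c:] = Const c"
    by (simp add: tpoly_def map_poly_pCons)
  moreover have "smult c p = [:c:] * p"
    by simp
  ultimately show ?thesis
    by (simp only: tpoly_mult)
qed

lemma tpoly_monom: "tpoly (monom c k) = Poly_Mapping.single (Poly_Mapping.single 0 k) c"
proof -
  have X_power: "tpoly ([:0, 1:] ^ k) = Var 0 ^ k"
    by (induction k) (simp_all add: tpoly_mult tpoly_def map_poly_pCons)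
  show ?thesis
    unfolding monom_altdef tpoly_smult X_power Var0_power Const_mult_single by simp
qed

lemma tpoly_eq_sum_single:
  "tpoly p = (\<Sum>i\<le>degree p. Poly_Mapping.single (Poly_Mapping.single 0 i) (coeff p i))"
proof -
  have "degree (map_poly Const p) = degree p"
    by (rule degree_map_poly) (simp add: Const_eq_0_iff)
  then show ?thesis
    unfolding tpoly_def poly_altdef by (simp add: coeff_map_poly Var0_power Const_mult_single)
qed

definition linear_form :: "nat \<Rightarrow> (nat \<Rightarrow> 'k::comm_ring_1 poly) \<Rightarrow> 'k mpoly" where
  "linear_form n v = (\<Sum>j\<in>{1..n}. tpoly (v j) * Var j)"

abbreviation tx_monom :: "nat \<Rightarrow> nat \<Rightarrow> nat \<Rightarrow>\<^sub>0 nat" where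
  "tx_monom k j \<equiv> Poly_Mapping.single 0 k + Poly_Mapping.single j 1"

lemma tpoly_mult_Var: "tpoly q * Var j = (\<Sum>i\<le>degree q. Poly_Mapping.single (tx_monom i j) (coeff q i))"
  by (simp add: tpoly_eq_sum_single sum_distrib_right Var_def mult_single)

lemma linear_form_eq_sum_single:
  "linear_form n v = (\<Sum>j\<in>{1..n}. \<Sum>i\<le>degree (v j). Poly_Mapping.single (tx_monom i j) (coeff (v j) i))"
  unfolding linear_form_def tpoly_mult_Var ..

lemma tx_monom_eq_iff:
  assumes "j \<ge> 1" "j' \<ge> 1"
  shows "tx_monom k j = tx_monom k' j' \<longleftrightarrow> k = k' \<and> j = j'"
proof
  assume eq: "tx_monom k j = tx_monom k' j'"
  from arg_cong[OF eq, of "\<lambda>m. Poly_Mapping.lookup m 0"] have "k = k'"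
    using assms by (simp add: lookup_add lookup_single)
  moreover from arg_cong[OF eq, of "\<lambda>m. Poly_Mapping.lookup m j"] have "j = j'"
    using assms by (auto simp: lookup_add lookup_single when_def split: if_splits)
  ultimately show "k = k' \<and> j = j'" ..
qed simp

lemma pderivv_tpoly_mult_Var:
  assumes "j \<ge> 1"
  shows "pderivv j (tpoly q * Var s) = (if s = j then tpoly q else 0)"
proof -
  have "Poly_Mapping.lookup (tx_monom i s) j = (if s = j then 1 else 0)" for i
    using assms by (simp add: lookup_add lookup_single when_def)
  then show ?thesis
    unfolding tpoly_mult_Var pderivv_sum pderivv_single by (simp add: tpoly_eq_sum_single)
qed

lemma pderivv_linear_form:
  assumes "j \<in> {1..n}"
  shows "pderivv j (linear_form n v) = tpoly (v j)"
  using assms by (simp add: linear_form_def pderivv_sum pderivv_tpoly_mult_Var)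

lemma lookup_linear_form:
  assumes "j \<in> {1..n}"
  shows "Poly_Mapping.lookup (linear_form n v) (tx_monom k j) = coeff (v j) k"
proof -
  have single: "Poly_Mapping.lookup (Poly_Mapping.single (tx_monom i j') c) (tx_monom k j)
      = (if j' = j then if i = k then c else 0 else 0)" if "j' \<in> {1..n}" for i j' and c :: 'a
  proof -
    have "j' \<ge> 1" "j \<ge> 1"
      using that assms by simp_all
    then show ?thesis
      unfolding lookup_single when_def tx_monom_eq_iff[OF \<open>j' \<ge> 1\<close> \<open>j \<ge> 1\<close>] by auto
  qed
  have "Poly_Mapping.lookup (linear_form n v) (tx_monom k j)
      = (\<Sum>j'\<in>{1..n}. \<Sum>i\<le>degree (v j'). if j' = j then if i = k then coeff (v j') i else 0 else 0)"
    unfolding linear_form_eq_sum_single lookup_sum by (intro sum.cong refl single)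
  also have "\<dots> = (\<Sum>j'\<in>{1..n}. if j' = j then \<Sum>i\<le>degree (v j'). if i = k then coeff (v j') i else 0 else 0)"
    by (intro sum.cong refl) simp
  also have "\<dots> = coeff (v j) k"
    using assms by (cases "k \<le> degree (v j)") (simp_all add: coeff_eq_0)
  finally show ?thesis .
qed

lemma keys_linear_form:
  assumes "m \<in> Poly_Mapping.keys (linear_form n v)"
  obtains j k where "j \<in> {1..n}" "m = tx_monom k j" "coeff (v j) k \<noteq> 0"
proof -
  from assms obtain j i where "j \<in> {1..n}"
    "m \<in> Poly_Mapping.keys (Poly_Mapping.single (tx_monom i j) (coeff (v j) i))"
    unfolding linear_form_eq_sum_single by (auto dest!: subsetD[OF keys_sum])
  moreover from this have "m = tx_monom i j"
    by (simp split: if_splits)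
  moreover from calculation have "coeff (v j) i \<noteq> 0"
    using assms lookup_linear_form by (fastforce simp: in_keys_iff)
  ultimately show ?thesis
    using that by blast
qed

lemma linear_form_cong: "(\<And>s. s \<in> {1..n} \<Longrightarrow> v s = w s) \<Longrightarrow> linear_form n v = linear_form n w"
  unfolding linear_form_def by (rule sum.cong) auto

lemma linear_form_zero: "linear_form n (\<lambda>s. 0) = 0"
  by (simp add: linear_form_def)

lemma linear_form_unit:
  assumes "i \<in> {1..n}"
  shows "linear_form n (\<lambda>s. if s = i then 1 else 0) = Var i"
  using assms by (simp add: linear_form_def if_distrib if_distribR cong: if_cong)

lemma linear_form_sum: "linear_form n (\<lambda>s. \<Sum>x\<in>A. f x s) = (\<Sum>x\<in>A. linear_form n (f x))"
  unfolding linear_form_def tpoly_sum sum_distrib_right by (rule sum.swap)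

lemma Const_mult_linear_form: "Const c * linear_form n v = linear_form n (\<lambda>s. smult c (v s))"
  unfolding linear_form_def by (simp add: tpoly_smult sum_distrib_left mult.assoc)

section \<open>The maps on coefficient vectors\<close>

definition tDt_vec :: "nat \<Rightarrow> nat \<Rightarrow> (nat \<Rightarrow> 'k::comm_ring_1 poly) \<Rightarrow> nat \<Rightarrow> 'k poly" where
  "tDt_vec n l v s = (if 2 \<le> s \<and> s \<le> n then monom (of_nat (n - s + 1)) l * v (s - 1) else 0)"

definition Dt'_vec :: "nat \<Rightarrow> (nat \<Rightarrow> 'k::comm_ring_1 poly) \<Rightarrow> nat \<Rightarrow> 'k poly" where
  "Dt'_vec n v s = (if 1 \<le> s \<and> s < n then of_nat s * v (s + 1) else 0)"

lemma sum_atLeastAtMost_1_shift: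
  fixes f :: "nat \<Rightarrow> 'a::comm_monoid_add"
  assumes "n \<ge> 1"
  shows "(\<Sum>s\<in>{1..n}. f s) = f 1 + (\<Sum>j\<in>{1..n-1}. f (j + 1))"
proof -
  obtain n' where n: "n = Suc n'"
    using assms by (cases n) auto
  have "(\<Sum>s\<in>{1..n}. f s) = f 1 + (\<Sum>s\<in>{Suc 1..Suc n'}. f s)"
    unfolding n by (rule sum.atLeast_Suc_atMost) simp
  also have "\<dots> = f 1 + (\<Sum>j\<in>{1..n'}. f (Suc j))"
    by (simp only: sum.shift_bounds_cl_Suc_ivl)
  finally show ?thesis
    by (simp add: n)
qed

lemma sum_atLeastAtMost_1_last:
  fixes f :: "nat \<Rightarrow> 'a::comm_monoid_add"
  assumes "n \<ge> 1"
  shows "(\<Sum>s\<in>{1..n}. f s) = (\<Sum>s\<in>{1..n-1}. f s) + f n"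
proof -
  obtain n' where n: "n = Suc n'"
    using assms by (cases n) auto
  show ?thesis
    unfolding n by (simp add: sum.cl_ivl_Suc)
qed

lemma tDt_linear_form:
  assumes "n \<ge> 1"
  shows "tDt n l (linear_form n v) = linear_form n (tDt_vec n l v)"
proof -
  have "tDt n l (linear_form n v) = (\<Sum>j\<in>{1..n-1}. Var 0 ^ l * (of_nat (n - j) * Var (j + 1) * tpoly (v j)))"
    unfolding tDt_def Dt_def sum_distrib_left
    by (intro sum.cong refl) (auto simp: pderivv_linear_form)
  also have "\<dots> = (\<Sum>j\<in>{1..n-1}. tpoly (tDt_vec n l v (j + 1)) * Var (j + 1))"
  proof (rule sum.cong[OF refl])
    fix j
    assume j: "j \<in> {1..n-1}"
    then have coeff: "tDt_vec n l v (j + 1) = monom (of_nat (n - j)) l * v j"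
      by (simp add: tDt_vec_def Suc_diff_Suc)
    have monom: "tpoly (monom (of_nat (n - j)) l) = of_nat (n - j) * Var 0 ^ l"
      by (simp add: tpoly_monom Var0_power mult_single flip: single_of_nat)
    show "Var 0 ^ l * (of_nat (n - j) * Var (j + 1) * tpoly (v j))
        = tpoly (tDt_vec n l v (j + 1)) * Var (j + 1)"
      unfolding coeff tpoly_mult monom by (simp only: ac_simps)
  qed
  also have "\<dots> = linear_form n (tDt_vec n l v)"
    unfolding linear_form_def sum_atLeastAtMost_1_shift[OF assms] by (simp add: tDt_vec_def)
  finally show ?thesis .
qed

lemma Dt'_linear_form:
  assumes "n \<ge> 1"
  shows "Dt' n (linear_form n v) = linear_form n (Dt'_vec n v)"
proof -
  have "Dt' n (linear_form n v) = (\<Sum>j\<in>{1 + 1..(n - 1) + 1}. of_nat (j - 1) * Var (j - 1) * tpoly (v j))"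
    unfolding Dt'_def using assms by (intro sum.cong) (auto simp: pderivv_linear_form)
  also have "\<dots> = (\<Sum>s\<in>{1..n-1}. of_nat s * Var s * tpoly (v (s + 1)))"
    by (simp only: sum.shift_bounds_cl_nat_ivl) simp
  also have "\<dots> = (\<Sum>s\<in>{1..n-1}. tpoly (Dt'_vec n v s) * Var s)"
    by (rule sum.cong) (auto simp: Dt'_vec_def tpoly_mult tpoly_of_nat ac_simps)
  also have "\<dots> = linear_form n (Dt'_vec n v)"
    unfolding linear_form_def sum_atLeastAtMost_1_last[OF assms] by (simp add: Dt'_vec_def)
  finally show ?thesis .
qed

definition vec_flow ::
    "((nat \<Rightarrow> 'k poly) \<Rightarrow> nat \<Rightarrow> 'k poly) \<Rightarrow> nat \<Rightarrow> 'k::field_char_0 \<Rightarrow> (nat \<Rightarrow> 'k poly) \<Rightarrow> nat \<Rightarrow> 'k poly"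
  where "vec_flow T N a v s = (\<Sum>k<N. smult (a ^ k / fact k) ((T ^^ k) v s))"

lemma exp_flow_linear_form:
  assumes B: "locally_nilpotent_linear B"
    and BT: "\<And>w. B (linear_form n w) = linear_form n (T w)"
    and nil: "\<And>m s. m \<ge> N \<Longrightarrow> s \<in> {1..n} \<Longrightarrow> (T ^^ m) v s = 0"
  shows "exp_flow B a (linear_form n v) = linear_form n (vec_flow T N a v)"
proof -
  have power: "(B ^^ m) (linear_form n v) = linear_form n ((T ^^ m) v)" for m
    by (induction m) (simp_all add: BT)
  have "\<forall>m\<ge>N. (B ^^ m) (linear_form n v) = 0"
  proof (intro allI impI)
    fix m
    assume "m \<ge> N"
    then have "linear_form n ((T ^^ m) v) = linear_form n (\<lambda>s. 0)"
      by (intro linear_form_cong) (simp add: nil)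
    then show "(B ^^ m) (linear_form n v) = 0"
      by (simp add: power linear_form_zero)
  qed
  from exp_flow_eq[OF B this] show ?thesis
    unfolding vec_flow_def by (simp add: power Const_mult_linear_form linear_form_sum[symmetric])
qed

lemma tDt_vec_power:
  assumes "s \<in> {1..n}"
  shows "(tDt_vec n l ^^ k) v s
           = (if k < s then monom (\<Prod>r<k. of_nat (n - s + 1 + r)) (l * k) * v (s - k) else 0)"
  using assms
proof (induction k arbitrary: s)
  case 0
  then show ?case by simp
next
  case (Suc k)
  show ?case
  proof (cases "2 \<le> s")
    case False
    then show ?thesis
      using Suc.prems by (simp add: tDt_vec_def)
  next
    case True
    have s1: "s - 1 \<in> {1..n}"
      using True Suc.prems by auto
    have "n - (s - 1) + 1 + r = n - s + 1 + Suc r" for r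
      using True Suc.prems by simp
    then have prod: "(\<Prod>r<Suc k. of_nat (n - s + 1 + r))
        = (of_nat (n - s + 1) :: 'a) * (\<Prod>r<k. of_nat (n - (s - 1) + 1 + r))"
      unfolding prod.lessThan_Suc_shift by simp
    have "(tDt_vec n l ^^ Suc k) v s = monom (of_nat (n - s + 1)) l * (tDt_vec n l ^^ k) v (s - 1)"
      using True Suc.prems by (simp add: tDt_vec_def)
    also have "\<dots> = (if Suc k < s then monom (\<Prod>r<Suc k. of_nat (n - s + 1 + r)) (l * Suc k)
        * v (s - Suc k) else 0)"
    proof (cases "k < s - 1")
      case True
      then have "Suc k < s" "s - 1 - k = s - Suc k"
        by simp_all
      then show ?thesis
        unfolding Suc.IH[OF s1] prod using True
        by (simp only: if_True mult.assoc[symmetric] mult_monom mult_Suc_right)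
    next
      case False
      then show ?thesis
        unfolding Suc.IH[OF s1] by simp
    qed
    finally show ?thesis .
  qed
qed

lemma Dt'_vec_power:
  assumes "r \<in> {1..n}"
  shows "(Dt'_vec n ^^ k) v r = (if r + k \<le> n then of_nat (\<Prod>q<k. r + q) * v (r + k) else 0)"
  using assms
proof (induction k arbitrary: r)
  case 0
  then show ?case by simp
next
  case (Suc k)
  show ?case
  proof (cases "r < n")
    case False
    then show ?thesis
      using Suc.prems by (simp add: Dt'_vec_def)
  next
    case True
    have r1: "r + 1 \<in> {1..n}"
      using True Suc.prems by auto
    have prod: "(\<Prod>q<Suc k. r + q) = r * (\<Prod>q<k. r + 1 + q)"
      unfolding prod.lessThan_Suc_shift by simp
    have "(Dt'_vec n ^^ Suc k) v r = of_nat r * (Dt'_vec n ^^ k) v (r + 1)"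
      using True Suc.prems by (simp add: Dt'_vec_def)
    also have "\<dots> = (if r + Suc k \<le> n then of_nat (\<Prod>q<Suc k. r + q) * v (r + Suc k) else 0)"
      unfolding Suc.IH[OF r1] prod by (simp add: mult.assoc)
    finally show ?thesis .
  qed
qed

lemma ipow_phi_Var:
  assumes "i \<in> {1..n}"
  shows "ipow (phi n l) d (Var i) = (linear_form n (vec_flow (tDt_vec n l) n 1
           (vec_flow (Dt'_vec n) n (of_int d) (vec_flow (tDt_vec n l) n (-1) (\<lambda>s. if s = i then 1 else 0))))
           :: 'k::field_char_0 mpoly)"
proof -
  have n: "n \<ge> 1"
    using assms by simp
  have tDt_flow: "exp_flow (tDt n l) a (linear_form n v) = linear_form n (vec_flow (tDt_vec n l) n a v)"
    for a and v :: "nat \<Rightarrow> 'k poly"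
    by (rule exp_flow_linear_form[OF locally_nilpotent_linear_tDt tDt_linear_form[OF n]])
      (simp add: tDt_vec_power)
  have Dt'_flow: "exp_flow (Dt' n) a (linear_form n v) = linear_form n (vec_flow (Dt'_vec n) n a v)"
    for a and v :: "nat \<Rightarrow> 'k poly"
    by (rule exp_flow_linear_form[OF locally_nilpotent_linear_Dt' Dt'_linear_form[OF n]])
      (simp add: Dt'_vec_power)
  show ?thesis
    unfolding ipow_phi linear_form_unit[OF assms, symmetric] comp_apply tDt_flow Dt'_flow ..
qed

section \<open>Degrees in \<open>t\<close> along the flows\<close>

lemma prod_lessThan_1_plus_of_nat: "(\<Prod>r<m. 1 + of_nat r :: 'a::{comm_semiring_1,semiring_char_0}) = fact m"
  by (simp add: fact_prod_Suc atLeast0LessThan)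

lemma vec_flow_tDt_vec:
  assumes "j \<in> {1..n}"
  shows "vec_flow (tDt_vec n l) N a v j = (\<Sum>k<N. smult (a ^ k / fact k)
     (if k < j then monom (\<Prod>r<k. of_nat (n - j + 1 + r)) (l * k) * v (j - k) else 0))"
  unfolding vec_flow_def by (simp add: tDt_vec_power[OF assms])

lemma vec_flow_Dt'_vec:
  assumes "r \<in> {1..n}"
  shows "vec_flow (Dt'_vec n) N a v r = (\<Sum>k<N. smult (a ^ k / fact k)
     (if r + k \<le> n then of_nat (\<Prod>q<k. r + q) * v (r + k) else 0))"
  unfolding vec_flow_def by (simp add: Dt'_vec_power[OF assms])

lemma vec_flow_tDt_vec_unit:
  assumes s: "s \<in> {1..n}" and i: "i \<in> {1..n}"
  shows "vec_flow (tDt_vec n l) n a (\<lambda>s. if s = i then 1 else 0) s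
           = (if i \<le> s then monom (a ^ (s - i) / fact (s - i) * (\<Prod>r<s - i. of_nat (n - s + 1 + r))) (l * (s - i))
              else 0)"
proof -
  let ?m = "if i \<le> s then monom (a ^ (s - i) / fact (s - i) * (\<Prod>r<s - i. of_nat (n - s + 1 + r))) (l * (s - i))
              else 0"
  have "vec_flow (tDt_vec n l) n a (\<lambda>s. if s = i then 1 else 0) s = (\<Sum>k<n. if k = s - i then ?m else 0)"
    unfolding vec_flow_tDt_vec[OF s] using s i by (intro sum.cong refl) (auto simp: smult_monom)
  moreover have "s - i < n"
    using s i by auto
  ultimately show ?thesis
    by simp
qed

lemma degree_vec_flow_tDt_vec_unit_le:
  assumes "s \<in> {1..n}" "i \<in> {1..n}"
  shows "degree (vec_flow (tDt_vec n l) n a (\<lambda>s. if s = i then 1 else 0) s) \<le> l * (n - i)"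
proof -
  have "l * (s - i) \<le> l * (n - i)"
    using assms by (intro mult_le_mono2) auto
  then show ?thesis
    unfolding vec_flow_tDt_vec_unit[OF assms] by (auto intro: order_trans[OF degree_monom_le])
qed

lemma coeff_vec_flow_tDt_vec_unit:
  assumes l: "l \<ge> 1" and s: "s \<in> {1..n}" and i: "i \<in> {1..n}"
  shows "coeff (vec_flow (tDt_vec n l) n a (\<lambda>s. if s = i then 1 else 0) s) (l * (n - i))
           = (if s = n then a ^ (n - i) else 0)"
proof (cases "s = n")
  case True
  then show ?thesis
    unfolding vec_flow_tDt_vec_unit[OF s i] using i by (simp add: prod_lessThan_1_plus_of_nat)
next
  case False
  then have "i \<le> s \<Longrightarrow> s - i < n - i"
    using s by auto
  then have "i \<le> s \<Longrightarrow> l * (s - i) \<noteq> l * (n - i)"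
    using l by simp
  then show ?thesis
    using False l by (simp add: vec_flow_tDt_vec_unit[OF s i] coeff_monom)
qed

lemma degree_vec_flow_Dt'_vec_le:
  assumes deg: "\<And>s. s \<in> {1..n} \<Longrightarrow> degree (v s) \<le> D" and r: "r \<in> {1..n}"
  shows "degree (vec_flow (Dt'_vec n) N a v r) \<le> D"
proof -
  have "degree (of_nat c * p) \<le> degree p" for c and p :: "'a poly"
    using degree_mult_le[of "of_nat c" p] by simp
  then have "r + k \<le> n \<Longrightarrow> degree (of_nat (\<Prod>q<k. r + q) * v (r + k)) \<le> D" for k
    using deg[of "r + k"] r by (meson atLeastAtMost_iff le_add1 le_trans order_trans)
  then have "degree (smult (a ^ k / fact k) (if r + k \<le> n then of_nat (\<Prod>q<k. r + q) * v (r + k) else 0)) \<le> D"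
    for k
    by (auto intro: order_trans[OF degree_smult_le])
  then show ?thesis
    unfolding vec_flow_Dt'_vec[OF r] by (simp add: degree_sum_le)
qed

lemma coeff_vec_flow_Dt'_vec_1:
  assumes n: "n \<ge> 1" and low: "\<And>s. s \<in> {1..n} \<Longrightarrow> s < n \<Longrightarrow> coeff (v s) D = 0"
  shows "coeff (vec_flow (Dt'_vec n) n a v 1) D = a ^ (n - 1) * coeff (v n) D"
proof -
  have "1 \<in> {1..n}"
    using n by simp
  have "coeff (vec_flow (Dt'_vec n) n a v 1) D = (\<Sum>k<n. if k = n - 1 then a ^ (n - 1) * coeff (v n) D else 0)"
    unfolding vec_flow_Dt'_vec[OF \<open>1 \<in> {1..n}\<close>] coeff_sum
  proof (intro sum.cong refl)
    fix k
    assume "k \<in> {..<n}"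
    moreover have "coeff (of_nat (\<Prod>q<k. 1 + q) * v (1 + k)) D = fact k * coeff (v (1 + k)) D"
      by (simp add: of_nat_mult_conv_smult fact_prod_Suc atLeast0LessThan del: of_nat_prod)
    ultimately show "coeff (smult (a ^ k / fact k) (if 1 + k \<le> n then of_nat (\<Prod>q<k. 1 + q) * v (1 + k) else 0)) D
        = (if k = n - 1 then a ^ (n - 1) * coeff (v n) D else 0)"
      using low[of "Suc k"] by auto
  qed
  then show ?thesis
    using n by simp
qed

lemma degree_vec_flow_tDt_vec_le:
  assumes deg: "\<And>s. s \<in> {1..n} \<Longrightarrow> degree (v s) \<le> D" and j: "j \<in> {1..n}"
  shows "degree (vec_flow (tDt_vec n l) N a v j) \<le> l * (j - 1) + D"
proof -
  have "degree (monom c (l * k) * v (j - k)) \<le> l * (j - 1) + D" if "k < j" for c and k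
  proof -
    have "j - k \<in> {1..n}"
      using j that by auto
    then have "degree (monom c (l * k) * v (j - k)) \<le> l * k + D"
      using degree_mult_le[of "monom c (l * k)" "v (j - k)"] degree_monom_le[of c "l * k"] deg
      by (meson add_mono le_trans)
    also have "\<dots> \<le> l * (j - 1) + D"
      using that by (intro add_mono mult_le_mono2) auto
    finally show ?thesis .
  qed
  then have "degree (smult (a ^ k / fact k)
      (if k < j then monom (\<Prod>r<k. of_nat (n - j + 1 + r)) (l * k) * v (j - k) else 0)) \<le> l * (j - 1) + D"
    for k
    by (auto intro: order_trans[OF degree_smult_le])
  then show ?thesis
    unfolding vec_flow_tDt_vec[OF j] by (simp add: degree_sum_le)
qed

lemma coeff_vec_flow_tDt_vec_n:
  assumes l: "l \<ge> 1" and n: "n \<ge> 1" and deg: "\<And>s. s \<in> {1..n} \<Longrightarrow> degree (v s) \<le> D"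
  shows "coeff (vec_flow (tDt_vec n l) n a v n) (l * (n - 1) + D) = a ^ (n - 1) * coeff (v 1) D"
proof -
  let ?c = "\<lambda>k. \<Prod>r<k. of_nat (n - n + 1 + r) :: 'a"
  have "n \<in> {1..n}"
    using n by simp
  have "coeff (vec_flow (tDt_vec n l) n a v n) (l * (n - 1) + D)
      = (\<Sum>k<n. if k = n - 1 then a ^ (n - 1) * coeff (v 1) D else 0)"
    unfolding vec_flow_tDt_vec[OF \<open>n \<in> {1..n}\<close>] coeff_sum
  proof (intro sum.cong refl)
    fix k
    assume k: "k \<in> {..<n}"
    show "coeff (smult (a ^ k / fact k) (if k < n then monom (?c k) (l * k) * v (n - k) else 0))
        (l * (n - 1) + D) = (if k = n - 1 then a ^ (n - 1) * coeff (v 1) D else 0)"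
    proof (cases "k = n - 1")
      case True
      then have "n - k = 1" "k < n"
        using n by auto
      then show ?thesis
        using True by (simp add: coeff_monom_mult prod_lessThan_1_plus_of_nat)
    next
      case False
      then have "k < n - 1" "n - k \<in> {1..n}"
        using k by auto
      then have "degree (monom (?c k) (l * k) * v (n - k)) \<le> l * k + D"
        using degree_mult_le[of "monom (?c k) (l * k)" "v (n - k)"] degree_monom_le[of "?c k" "l * k"]
          deg[of "n - k"]
        by (meson add_mono le_trans)
      also have "\<dots> < l * (n - 1) + D"
        using \<open>k < n - 1\<close> l by simp
      finally have "degree (monom (?c k) (l * k) * v (n - k)) < l * (n - 1) + D" .
      then show ?thesis
        using False k by (simp add: coeff_eq_0)
    qed
  qed
  then show ?thesis
    using n by simp
qed

section \<open>Linear forms in \<open>Pset n \<alpha> 1\<close>\<close>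

lemma sum_lookup_tx_monom:
  assumes "j \<in> {1..n}"
  shows "(\<Sum>s\<in>{0..n}. Poly_Mapping.lookup (tx_monom k j) s * w s) = k * w 0 + w j"
proof -
  have "(\<Sum>s\<in>{0..n}. Poly_Mapping.lookup (tx_monom k j) s * w s)
      = (\<Sum>s\<in>{0..n}. (if s = 0 then k * w s else 0) + (if s = j then w s else 0))"
    using assms by (intro sum.cong refl) (auto simp: lookup_add lookup_single when_def)
  also have "\<dots> = k * w 0 + w j"
    using assms by (simp add: sum.distrib)
  finally show ?thesis .
qed

lemma wdeg_linear_form_le:
  assumes "linear_form n v \<noteq> 0"
    and "\<And>j k. j \<in> {1..n} \<Longrightarrow> coeff (v j) k \<noteq> 0 \<Longrightarrow> k * w 0 + w j \<le> B"
  shows "wdeg n w (linear_form n v) \<le> B"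
proof -
  have "x \<le> B" if "x \<in> (\<lambda>m. \<Sum>s\<in>{0..n}. Poly_Mapping.lookup m s * w s) ` Poly_Mapping.keys (linear_form n v)" for x
  proof -
    from that obtain m where m: "m \<in> Poly_Mapping.keys (linear_form n v)"
      and x: "x = (\<Sum>s\<in>{0..n}. Poly_Mapping.lookup m s * w s)"
      by blast
    from m obtain j k where j: "j \<in> {1..n}" and "m = tx_monom k j" and c: "coeff (v j) k \<noteq> 0"
      by (rule keys_linear_form)
    then have "x = k * w 0 + w j"
      unfolding x by (simp only: sum_lookup_tx_monom[OF j])
    then show "x \<le> B"
      using assms(2)[OF j c] by simp
  qed
  then show ?thesis
    unfolding wdeg_def using assms(1) by (simp add: Max_le_iff)
qed

lemma is_lead_mon_linear_form:
  assumes n: "n \<ge> 1" and top: "coeff (v n) \<alpha> \<noteq> 0"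
    and below: "\<And>j k. j \<in> {1..n} \<Longrightarrow> coeff (v j) k \<noteq> 0 \<Longrightarrow> tx_monom k j \<noteq> tx_monom \<alpha> n \<Longrightarrow> k < \<alpha>"
  shows "is_lead_mon (linear_form n v) (tx_monom \<alpha> n)"
  unfolding is_lead_mon_def
proof (intro conjI ballI impI)
  have "n \<in> {1..n}"
    using n by simp
  show "tx_monom \<alpha> n \<in> Poly_Mapping.keys (linear_form n v)"
    unfolding in_keys_iff lookup_linear_form[OF \<open>n \<in> {1..n}\<close>] by (rule top)
next
  fix m
  assume "m \<in> Poly_Mapping.keys (linear_form n v)" "m \<noteq> tx_monom \<alpha> n"
  moreover from this(1) obtain j k where "j \<in> {1..n}" "m = tx_monom k j" "coeff (v j) k \<noteq> 0"
    by (rule keys_linear_form)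
  ultimately have "Poly_Mapping.lookup m 0 < Poly_Mapping.lookup (tx_monom \<alpha> n) 0"
    using n below by (simp add: lookup_add lookup_single)
  then show "lex_less m (tx_monom \<alpha> n)"
    unfolding lex_less_def by blast
qed

lemma w2_weight_le:
  fixes n l j k \<alpha> :: nat
  assumes "n \<ge> 3" "l \<ge> 1" "j \<in> {1..n}" "k + l * (n - j) \<le> \<alpha>"
  shows "k * w2 n 0 + w2 n j \<le> (n - 2) * \<alpha> + (n - 1) * 1"
proof -
  define p q where "p = n - 2" and "q = n - j"
  have w2: "w2 n 0 = p" "w2 n j = (p + 1) + q" "n - 1 = p + 1"
    using assms(1,3) by (auto simp: w2_def p_def q_def)
  have "p * k + p * l * q \<le> p * \<alpha>"
    using mult_le_mono2[OF assms(4), of p] by (simp add: q_def distrib_left mult.assoc)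
  moreover have "1 * q \<le> (p * l) * q"
    using assms(1,2) by (intro mult_le_mono1) (simp add: p_def)
  ultimately have "p * k + q \<le> p * \<alpha>"
    by linarith
  then show ?thesis
    unfolding w2 p_def[symmetric] by (simp add: mult.commute)
qed

lemma linear_form_in_Pset:
  fixes v :: "nat \<Rightarrow> 'k::comm_ring_1 poly"
  assumes n: "n \<ge> 3" and l: "l \<ge> 1"
    and deg: "\<And>j. j \<in> {1..n} \<Longrightarrow> degree (v j) + l * (n - j) \<le> \<alpha>"
    and top: "coeff (v n) \<alpha> \<noteq> 0"
  shows "linear_form n v \<in> Pset n \<alpha> 1"
proof -
  have k: "k + l * (n - j) \<le> \<alpha>" if "j \<in> {1..n}" "coeff (v j) k \<noteq> 0" for j k
    using le_degree[OF that(2)] deg[OF that(1)] by linarith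
  have lead: "is_lead_mon (linear_form n v) (tx_monom \<alpha> n)"
  proof (rule is_lead_mon_linear_form)
    fix j k
    assume j: "j \<in> {1..n}" "coeff (v j) k \<noteq> 0" "tx_monom k j \<noteq> tx_monom \<alpha> n"
    show "k < \<alpha>"
    proof (cases "j = n")
      case True
      then have "k \<noteq> \<alpha>"
        using j(3) by auto
      then show ?thesis
        using k[OF j(1,2)] by simp
    next
      case False
      then have "1 * 1 \<le> l * (n - j)"
        using j(1) l by (intro mult_le_mono) auto
      then show ?thesis
        using k[OF j(1,2)] by linarith
    qed
  qed (use n top in simp_all)
  then have nz: "linear_form n v \<noteq> 0"
    by (auto simp: is_lead_mon_def)
  have "wdeg n w1 (linear_form n v) \<le> \<alpha> + 1"
    using k by (intro wdeg_linear_form_le[OF nz]) (fastforce simp: w1_def)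
  moreover have "wdeg n (w2 n) (linear_form n v) \<le> (n - 2) * \<alpha> + (n - 1) * 1"
    using k w2_weight_le[OF n l] by (intro wdeg_linear_form_le[OF nz]) blast
  ultimately show ?thesis
    using nz lead by (simp add: Pset_def)
qed

lemma ipow_phi_Var_linear_form:
  fixes d :: int
  assumes l: "l \<ge> 1" and i: "i \<in> {1..n}"
  obtains w :: "nat \<Rightarrow> 'k::field_char_0 poly" where
    "ipow (phi n l) d (Var i) = linear_form n w"
    "\<And>j. j \<in> {1..n} \<Longrightarrow> degree (w j) \<le> l * (j - 1) + l * (n - i)"
    "coeff (w n) (l * (n - 1) + l * (n - i)) = of_int d ^ (n - 1) * (-1) ^ (n - i)"
proof -
  define y :: "nat \<Rightarrow> 'k poly" where "y = vec_flow (tDt_vec n l) n (-1) (\<lambda>s. if s = i then 1 else 0)"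
  define z where "z = vec_flow (Dt'_vec n) n (of_int d) y"
  define w where "w = vec_flow (tDt_vec n l) n 1 z"
  have n: "n \<ge> 1"
    using i by simp
  have deg_y: "degree (y s) \<le> l * (n - i)" if "s \<in> {1..n}" for s
    unfolding y_def by (rule degree_vec_flow_tDt_vec_unit_le[OF that i])
  have coeff_y: "coeff (y s) (l * (n - i)) = (if s = n then (-1) ^ (n - i) else 0)" if "s \<in> {1..n}" for s
    unfolding y_def by (rule coeff_vec_flow_tDt_vec_unit[OF l that i])
  have deg_z: "degree (z s) \<le> l * (n - i)" if "s \<in> {1..n}" for s
    unfolding z_def by (rule degree_vec_flow_Dt'_vec_le[OF deg_y that])
  have "coeff (z 1) (l * (n - i)) = of_int d ^ (n - 1) * coeff (y n) (l * (n - i))"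
    unfolding z_def by (rule coeff_vec_flow_Dt'_vec_1[OF n]) (simp add: coeff_y)
  also have "\<dots> = of_int d ^ (n - 1) * (-1) ^ (n - i)"
    using n by (simp add: coeff_y)
  finally have coeff_z: "coeff (z 1) (l * (n - i)) = of_int d ^ (n - 1) * (-1) ^ (n - i)" .
  have "coeff (w n) (l * (n - 1) + l * (n - i)) = 1 ^ (n - 1) * coeff (z 1) (l * (n - i))"
    unfolding w_def by (rule coeff_vec_flow_tDt_vec_n[OF l n deg_z])
  moreover have "ipow (phi n l) d (Var i) = linear_form n w"
    unfolding w_def z_def y_def by (rule ipow_phi_Var[OF i])
  moreover have "degree (w j) \<le> l * (j - 1) + l * (n - i)" if "j \<in> {1..n}" for j
    unfolding w_def by (rule degree_vec_flow_tDt_vec_le[OF deg_z that])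
  ultimately show ?thesis
    using that coeff_z by simp
qed

theorem mainTheorem8:
  fixes n l i :: nat and d :: int
  assumes "n \<ge> 3" and "l \<ge> 1" and "d \<noteq> 0" and "1 \<le> i" and "i \<le> n"
  shows "ipow (phi n l :: 'k::field_char_0 mpoly \<Rightarrow> 'k mpoly) d (Var i)
           \<in> Pset n ((2 * n - i - 1) * l) 1"
proof -
  have i: "i \<in> {1..n}"
    using assms by simp
  obtain w :: "nat \<Rightarrow> 'k poly" where phi: "ipow (phi n l) d (Var i) = linear_form n w"
    and deg: "\<And>j. j \<in> {1..n} \<Longrightarrow> degree (w j) \<le> l * (j - 1) + l * (n - i)"
    and top: "coeff (w n) (l * (n - 1) + l * (n - i)) = of_int d ^ (n - 1) * (-1) ^ (n - i)"
    using ipow_phi_Var_linear_form[OF assms(2) i, where d = d] by blast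
  have \<alpha>: "(2 * n - i - 1) * l = l * (n - 1) + l * (n - i)"
    using i by (simp add: algebra_simps)
  have "degree (w j) + l * (n - j) \<le> (2 * n - i - 1) * l" if "j \<in> {1..n}" for j
  proof -
    have "l * (j - 1) + l * (n - j) = l * (n - 1)"
      using that by (simp add: diff_mult_distrib2)
    then show ?thesis
      using deg[OF that] \<alpha> by linarith
  qed
  moreover have "coeff (w n) ((2 * n - i - 1) * l) \<noteq> 0"
    using top assms(3) \<alpha> by simp
  ultimately show ?thesis
    unfolding phi by (rule linear_form_in_Pset[OF assms(1,2)])
qed

end
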